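(* Let $N\ge1$ and $M\le N$ be positive integers of the same parity. Write $N=2\rho$ or $N=2\rho+1$, and set $p=0$ if $N$ is even and $p=-\tfrac12$ if $N$ is odd. Let $$B_N(z)=2^{-(N-1)}z^{-\lceil N/2\rceil}(z+1)^N.$$ Let $c_M$ be the odd-symmetric Laurent polynomial ($c_M(z)=c_M(z^{-1})$), with coefficients supported in $[-\lceil M/2\rceil+1,\lceil M/2\rceil-1]$, such that $$\sum_{i=0}^s\binom{s}{i}\frac{d^ic_M}{dz^i}(1)\frac{d^{s-i}B_N}{dz^{s-i}}(1)=2\prod_{i=0}^{s-1}(p-i),\qquad s=0,\dots,M-1.$$ Define $\delta(z):=-\frac{(1-z)^2}{4z}$ and $\sigma(z):=\frac{(1+z)^2}{4z}$. Then $a_{M,N}(z):=B_N(z)c_M(z)$ equals $$a_{M,N}(z)=2\,\sigma^\rho(z)\sum_{s=0}^{\lfloor (M-1)/2\rfloor}\binom{\rho+s-1}{s}\delta^s(z)\quad\text{if } N=2\rho,$$ $$a_{M,N}(z)=\frac{z+1}{z}\,\sigma^\rho(z)\sum_{s=0}^{\lfloor (M-1)/2\rfloor}\binom{\rho-\frac12+s}{s}\delta^s(z)\quad\text{if } N=2\rho+1.$$ This is the symbol of the (primal/dual) polynomial pseudo-spline.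
   Context: $\lceil L\rceil:=\min\{m\in\mathbb{Z}:m\ge L\}$ and $\lfloor L\rfloor:=\max\{m\in\mathbb{Z}:m\le L\}$. Generalized binomial coefficients are $\binom{x}{s}=x(x-1)\cdots(x-s+1)/s!$. An empty product equals $1$. *)

theory Defs
  imports "HOL-Analysis.Analysis"
begin

definition BN :: "nat \<Rightarrow> real \<Rightarrow> real" where
  "BN N z = (1/2) ^ (N - 1) * z powi (- int ((N + 1) div 2)) * (z + 1) ^ N"

definition laurent :: "(int \<Rightarrow> real) \<Rightarrow> int \<Rightarrow> int \<Rightarrow> real \<Rightarrow> real" where
  "laurent c lo hi z = (\<Sum>j\<in>{lo..hi}. c j * z powi j)"

definition delta_sym :: "real \<Rightarrow> real" where
  "delta_sym z = - ((1 - z)^2 / (4 * z))"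

definition sigma_sym :: "real \<Rightarrow> real" where
  "sigma_sym z = (1 + z)^2 / (4 * z)"

end

theory Submission
  imports Defs "HOL-Computational_Algebra.Polynomial" "HOL-Number_Theory.Cong"
begin

(* All functions are regarded as smooth real functions on (0, oo).  By the Leibniz rule
   the moment conditions say that L * B_N - 2 z^p vanishes to order M at z = 1, where L is the
   Laurent polynomial c_M.  Since B_N = 2 sigma^rho (N even) or (z+1)/z sigma^rho (N odd) and
   sigma = 1 - delta, the candidate C = S_K(delta), with S_K(a, x) the degree-K truncation of the
   binomial series (1 - x)^(-a) and K = (M-1) div 2, satisfies the same conditions: in the
   polynomial ring (1 - X)^m S_K(m) = 1 and S_K(a)^2 = S_K(2a) modulo X^(K+1) (Vandermonde),
   and delta^(K+1) vanishes to order 2K+2 >= M at 1.  For odd N both products are squared to get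
   rid of z^(-1/2).  Hence L - C vanishes to order M at 1, and since z^K (L - C) is a polynomial
   of degree <= 2K < M, L = C. *)

definition smooth_on :: "real set \<Rightarrow> (real \<Rightarrow> real) \<Rightarrow> bool" where
  "smooth_on S f \<longleftrightarrow> (\<forall>n. \<forall>x\<in>S. (deriv ^^ n) f field_differentiable (at x))"

lemma smooth_on_has_derivative:
  "smooth_on S f \<Longrightarrow> x \<in> S \<Longrightarrow> ((deriv ^^ n) f has_field_derivative (deriv ^^ Suc n) f x) (at x)"
  unfolding smooth_on_def by (simp add: DERIV_deriv_iff_field_differentiable)

lemma smooth_on_subset: "smooth_on T f \<Longrightarrow> S \<subseteq> T \<Longrightarrow> smooth_on S f"
  unfolding smooth_on_def by blast

lemma higher_deriv_chain:
  assumes "open S" and start: "\<And>x. x \<in> S \<Longrightarrow> F 0 x = f x"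
    and step: "\<And>n x. x \<in> S \<Longrightarrow> (F n has_field_derivative F (Suc n) x) (at x)"
  shows higher_deriv_chain_eq: "x \<in> S \<Longrightarrow> (deriv ^^ n) f x = F n x"
    and higher_deriv_chain_smooth: "smooth_on S f"
proof -
  have eq: "(deriv ^^ n) f x = F n x" if "x \<in> S" for n x
    using that
  proof (induction n arbitrary: x)
    case 0
    then show ?case using start by simp
  next
    case (Suc n)
    have "\<forall>\<^sub>F y in nhds x. (deriv ^^ n) f y = F n y"
      using eventually_nhds_in_open[OF assms(1) Suc.prems] by (rule eventually_mono) (use Suc.IH in auto)
    then have "deriv ((deriv ^^ n) f) x = deriv (F n) x" by (simp add: deriv_cong_ev)
    also have "\<dots> = F (Suc n) x" using step[OF Suc.prems] by (rule DERIV_imp_deriv)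
    finally show ?case by simp
  qed
  then show "x \<in> S \<Longrightarrow> (deriv ^^ n) f x = F n x" .
  show "smooth_on S f" unfolding smooth_on_def
  proof (intro allI ballI)
    fix n x assume x: "x \<in> S"
    have "((deriv ^^ n) f has_field_derivative F (Suc n) x) (at x)"
      by (rule has_field_derivative_transform_within_open[OF step[OF x] assms(1) x]) (use eq in auto)
    then show "(deriv ^^ n) f field_differentiable (at x)" unfolding field_differentiable_def by blast
  qed
qed

lemma smooth_on_cong:
  assumes "smooth_on S f" "open S" "\<And>x. x \<in> S \<Longrightarrow> f x = g x"
  shows "smooth_on S g"
  by (rule higher_deriv_chain_smooth[OF assms(2), where F="\<lambda>n. (deriv ^^ n) f"])
     (use assms smooth_on_has_derivative in auto)

lemma Suc_choose_cases: "Suc n choose k = (n choose k) + (if k = 0 then 0 else n choose (k - 1))"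
  by (cases k) simp_all

lemma binomial_sum_Suc:
  fixes a b :: "nat \<Rightarrow> 'a::comm_semiring_1"
  shows "(\<Sum>i=0..n. of_nat (n choose i) * (a (Suc i) * b (n - i) + a i * b (Suc (n - i))))
       = (\<Sum>i=0..Suc n. of_nat (Suc n choose i) * a i * b (Suc n - i))"
proof -
  have lower: "(\<Sum>i=0..Suc n. of_nat (n choose i) * a i * b (Suc n - i))
      = (\<Sum>i=0..n. of_nat (n choose i) * (a i * b (Suc (n - i))))"
    by (simp add: Suc_diff_le mult.assoc binomial_eq_0)
  have upper: "(\<Sum>i=0..Suc n. of_nat (if i = 0 then 0 else n choose (i - 1)) * a i * b (Suc n - i))
      = (\<Sum>i=0..n. of_nat (n choose i) * (a (Suc i) * b (n - i)))"
    by (subst sum.atLeast0_atMost_Suc_shift) (simp add: mult.assoc)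
  have "(\<Sum>i=0..Suc n. of_nat (Suc n choose i) * a i * b (Suc n - i))
      = (\<Sum>i=0..Suc n. of_nat (n choose i) * a i * b (Suc n - i))
        + (\<Sum>i=0..Suc n. of_nat (if i = 0 then 0 else n choose (i - 1)) * a i * b (Suc n - i))"
    unfolding Suc_choose_cases of_nat_add distrib_right sum.distrib ..
  then show ?thesis
    by (simp only: lower upper sum.distrib[symmetric] distrib_left add.commute)
qed

lemma leibniz_real:
  assumes f: "smooth_on S f" and g: "smooth_on S g" and "open S"
  shows higher_deriv_mult_real: "x \<in> S \<Longrightarrow> (deriv ^^ n) (\<lambda>w. f w * g w) x =
           (\<Sum>i=0..n. of_nat (n choose i) * (deriv ^^ i) f x * (deriv ^^ (n - i)) g x)"
    and smooth_on_mult: "smooth_on S (\<lambda>w. f w * g w)"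
proof -
  define F where "F n w = (\<Sum>i=0..n. of_nat (n choose i) * (deriv ^^ i) f w * (deriv ^^ (n - i)) g w)" for n w
  have step: "(F n has_field_derivative F (Suc n) x) (at x)" if "x \<in> S" for n x
  proof -
    have "(F n has_field_derivative (\<Sum>i=0..n. of_nat (n choose i) *
        ((deriv ^^ Suc i) f x * (deriv ^^ (n - i)) g x + (deriv ^^ i) f x * (deriv ^^ Suc (n - i)) g x))) (at x)"
      unfolding F_def
      using smooth_on_has_derivative[OF f that] smooth_on_has_derivative[OF g that]
      by (auto intro!: derivative_eq_intros simp: algebra_simps)
    then show ?thesis
      by (simp only: F_def binomial_sum_Suc[where a="\<lambda>i. (deriv ^^ i) f x" and b="\<lambda>i. (deriv ^^ i) g x"])
  qed
  show "x \<in> S \<Longrightarrow> (deriv ^^ n) (\<lambda>w. f w * g w) x = F n x"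
    by (rule higher_deriv_chain_eq[where F=F, OF \<open>open S\<close> _ step]) (simp_all add: F_def)
  show "smooth_on S (\<lambda>w. f w * g w)"
    by (rule higher_deriv_chain_smooth[where F=F, OF \<open>open S\<close> _ step]) (simp_all add: F_def)
qed

lemma smooth_on_const:
  fixes c x :: real
  shows "smooth_on S (\<lambda>w. c)" and higher_deriv_const_real: "(deriv ^^ n) (\<lambda>w. c) x = (if n = 0 then c else 0)"
proof -
  define F :: "nat \<Rightarrow> real \<Rightarrow> real" where "F = (\<lambda>n w. if n = 0 then c else 0)"
  have step: "(F n has_field_derivative F (Suc n) x) (at x)" for n x
    unfolding F_def by (cases n) simp_all
  show "smooth_on S (\<lambda>w. c)"
    by (rule smooth_on_subset[OF higher_deriv_chain_smooth[where F=F, OF open_UNIV _ step]]) (simp_all add: F_def)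
  show "(deriv ^^ n) (\<lambda>w. c) x = (if n = 0 then c else 0)"
    using higher_deriv_chain_eq[where F=F, OF open_UNIV _ step] by (simp add: F_def)
qed

lemma smooth_on_ident:
  fixes x :: real
  shows "smooth_on S (\<lambda>w. w)"
    and higher_deriv_ident: "(deriv ^^ n) (\<lambda>w. w) x = (if n = 0 then x else if n = 1 then 1 else 0)"
proof -
  define F :: "nat \<Rightarrow> real \<Rightarrow> real" where "F = (\<lambda>n w. if n = 0 then w else if n = 1 then 1 else 0)"
  have step: "(F n has_field_derivative F (Suc n) x) (at x)" for n x
    unfolding F_def by (cases n) simp_all
  show "smooth_on S (\<lambda>w. w)"
    by (rule smooth_on_subset[OF higher_deriv_chain_smooth[where F=F, OF open_UNIV _ step]]) (simp_all add: F_def)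
  show "(deriv ^^ n) (\<lambda>w. w) x = (if n = 0 then x else if n = 1 then 1 else 0)"
    using higher_deriv_chain_eq[where F=F, OF open_UNIV _ step] by (simp add: F_def)
qed

lemma smooth_on_sum:
  assumes "\<And>i. i \<in> I \<Longrightarrow> smooth_on S (f i)" "open S"
  shows "smooth_on S (\<lambda>w. \<Sum>i\<in>I. f i w)"
proof -
  define F where "F n w = (\<Sum>i\<in>I. (deriv ^^ n) (f i) w)" for n w
  have step: "x \<in> S \<Longrightarrow> (F n has_field_derivative F (Suc n) x) (at x)" for n x
    unfolding F_def using smooth_on_has_derivative[OF assms(1)] by (auto intro!: derivative_eq_intros)
  show "smooth_on S (\<lambda>w. \<Sum>i\<in>I. f i w)"
    by (rule higher_deriv_chain_smooth[where F=F, OF assms(2) _ step]) (simp_all add: F_def)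
qed

lemma smooth_on_lincomb:
  assumes f: "smooth_on S f" and g: "smooth_on S g" and "open S"
  shows "smooth_on S (\<lambda>w. a * f w + b * g w)"
    and higher_deriv_lincomb_real: "x \<in> S \<Longrightarrow>
      (deriv ^^ n) (\<lambda>w. a * f w + b * g w) x = a * (deriv ^^ n) f x + b * (deriv ^^ n) g x"
proof -
  define F where "F n w = a * (deriv ^^ n) f w + b * (deriv ^^ n) g w" for n w
  have step: "x \<in> S \<Longrightarrow> (F n has_field_derivative F (Suc n) x) (at x)" for n x
    unfolding F_def using smooth_on_has_derivative[OF f] smooth_on_has_derivative[OF g]
    by (auto intro!: derivative_eq_intros)
  show "smooth_on S (\<lambda>w. a * f w + b * g w)"
    by (rule higher_deriv_chain_smooth[where F=F, OF \<open>open S\<close> _ step]) (simp_all add: F_def)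
  show "x \<in> S \<Longrightarrow> (deriv ^^ n) (\<lambda>w. a * f w + b * g w) x = a * (deriv ^^ n) f x + b * (deriv ^^ n) g x"
    using higher_deriv_chain_eq[where F=F, OF \<open>open S\<close> _ step] by (simp add: F_def)
qed

lemma smooth_on_add:
  "smooth_on S f \<Longrightarrow> smooth_on S g \<Longrightarrow> open S \<Longrightarrow> smooth_on S (\<lambda>w. f w + g w)"
  using smooth_on_lincomb(1)[of S f g 1 1] by simp

lemma smooth_on_diff:
  assumes "smooth_on S f" "smooth_on S g" "open S"
  shows "smooth_on S (\<lambda>w. f w - g w)"
    and higher_deriv_diff_real: "x \<in> S \<Longrightarrow> (deriv ^^ n) (\<lambda>w. f w - g w) x = (deriv ^^ n) f x - (deriv ^^ n) g x"
  using smooth_on_lincomb[OF assms, where a=1 and b="-1"] by simp_all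

lemma smooth_on_cmult:
  assumes "smooth_on S f" "open S"
  shows "smooth_on S (\<lambda>w. c * f w)"
    and higher_deriv_cmult_real: "x \<in> S \<Longrightarrow> (deriv ^^ n) (\<lambda>w. c * f w) x = c * (deriv ^^ n) f x"
  using smooth_on_lincomb[OF assms(1) assms(1) assms(2), where a=c and b=0] by simp_all

lemma smooth_on_shift: "open S \<Longrightarrow> smooth_on S (\<lambda>w. w - c)"
  by (intro smooth_on_diff(1) smooth_on_ident(1) smooth_on_const(1))

lemma smooth_on_power: "smooth_on S f \<Longrightarrow> open S \<Longrightarrow> smooth_on S (\<lambda>w. f w ^ m)"
  by (induction m) (simp_all add: smooth_on_const leibniz_real(2))

lemma smooth_on_powr:
  fixes a :: real
  shows "smooth_on {0<..} (\<lambda>w. w powr a)"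
    and higher_deriv_powr: "x > 0 \<Longrightarrow> (deriv ^^ n) (\<lambda>w. w powr a) x = (\<Prod>i<n. a - real i) * x powr (a - real n)"
proof -
  define F where "F n w = (\<Prod>i<n. a - real i) * w powr (a - real n)" for n w
  have step: "x \<in> {0<..} \<Longrightarrow> (F n has_field_derivative F (Suc n) x) (at x)" for n x
    unfolding F_def by (auto intro!: derivative_eq_intros simp: powr_diff powr_add field_simps)
  show "smooth_on {0<..} (\<lambda>w. w powr a)"
    by (rule higher_deriv_chain_smooth[where F=F, OF open_greaterThan _ step]) (simp add: F_def)
  show "x > 0 \<Longrightarrow> (deriv ^^ n) (\<lambda>w. w powr a) x = (\<Prod>i<n. a - real i) * x powr (a - real n)"
    using higher_deriv_chain_eq[where F=F, OF open_greaterThan _ step] by (simp add: F_def)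
qed

lemma smooth_on_poly_comp:
  fixes P :: "real poly"
  assumes "smooth_on S f" "open S"
  shows "smooth_on S (\<lambda>w. poly P (f w))"
  unfolding poly_altdef
  by (intro smooth_on_sum(1) smooth_on_cmult(1) smooth_on_power assms)

lemma higher_deriv_poly:
  fixes P :: "real poly"
  shows "(deriv ^^ n) (poly P) x = poly ((pderiv ^^ n) P) x"
  using higher_deriv_chain_eq[where F="\<lambda>n. poly ((pderiv ^^ n) P)" and f="poly P", OF open_UNIV]
  by simp

definition vanishes_at_one :: "nat \<Rightarrow> (real \<Rightarrow> real) \<Rightarrow> bool" where
  "vanishes_at_one M f \<longleftrightarrow> (\<forall>s<M. (deriv ^^ s) f 1 = 0)"

lemma vanishes_at_one_cong:
  assumes "vanishes_at_one M f" "open S" "1 \<in> S" "\<And>x. x \<in> S \<Longrightarrow> f x = g x"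
  shows "vanishes_at_one M g"
proof -
  have "\<forall>\<^sub>F x in nhds 1. f x = g x"
    using eventually_nhds_in_open[OF assms(2,3)] by (rule eventually_mono) (rule assms(4))
  then have "(deriv ^^ s) f 1 = (deriv ^^ s) g 1" for s
    by (rule higher_deriv_cong_ev) (rule refl)
  then show ?thesis
    using assms(1) by (simp add: vanishes_at_one_def)
qed

lemma vanishes_at_one_diff:
  assumes "vanishes_at_one M f" "vanishes_at_one M g"
    and "smooth_on S f" "smooth_on S g" "open S" "1 \<in> S"
  shows "vanishes_at_one M (\<lambda>w. f w - g w)"
  using assms higher_deriv_diff_real[OF assms(3-6)] by (simp add: vanishes_at_one_def)

lemma vanishes_at_one_mult:
  assumes "vanishes_at_one M f" "smooth_on S u" "smooth_on S f" "open S" "1 \<in> S"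
  shows "vanishes_at_one M (\<lambda>w. u w * f w)"
  unfolding vanishes_at_one_def
proof (intro allI impI)
  fix s assume "s < M"
  then show "(deriv ^^ s) (\<lambda>w. u w * f w) 1 = 0"
    using assms(1) by (simp add: leibniz_real(1)[OF assms(2-5)] vanishes_at_one_def)
qed

lemma vanishes_at_one_cancel:
  assumes "vanishes_at_one M (\<lambda>w. u w * f w)" "u 1 \<noteq> 0"
    and "smooth_on S u" "smooth_on S f" "open S" "1 \<in> S"
  shows "vanishes_at_one M f"
  unfolding vanishes_at_one_def
proof (intro allI impI)
  fix s assume "s < M"
  then show "(deriv ^^ s) f 1 = 0"
  proof (induction s rule: less_induct)
    case (less s)
    have lower_terms: "(\<Sum>i=Suc 0..s. of_nat (s choose i) * (deriv ^^ i) u 1 * (deriv ^^ (s - i)) f 1) = 0"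
      by (rule sum.neutral) (use less in auto)
    have "0 = (deriv ^^ s) (\<lambda>w. u w * f w) 1"
      using assms(1) less.prems by (simp add: vanishes_at_one_def)
    also have "\<dots> = u 1 * (deriv ^^ s) f 1"
      by (simp add: leibniz_real(1)[OF assms(3-6)] sum.atLeast_Suc_atMost lower_terms)
    finally show ?case using assms(2) by simp
  qed
qed

lemma vanishes_at_one_shifted_power:
  assumes "smooth_on S h" "open S" "1 \<in> S"
  shows "vanishes_at_one m (\<lambda>w. (w - 1) ^ m * h w)"
proof (induction m)
  case 0
  then show ?case by (simp add: vanishes_at_one_def)
next
  case (Suc m)
  have shift: "smooth_on S (\<lambda>w. w - 1)"
    by (rule smooth_on_shift[OF assms(2)])
  have "vanishes_at_one (Suc m) (\<lambda>w. (w - 1) * ((w - 1) ^ m * h w))"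
    unfolding vanishes_at_one_def
  proof (intro allI impI)
    fix s assume s: "s < Suc m"
    have "(deriv ^^ i) (\<lambda>w. w - 1) 1 * (deriv ^^ (s - i)) (\<lambda>w. (w - 1) ^ m * h w) 1 = 0"
      if "i \<in> {0..s}" for i
      using Suc.IH s that by (cases "i = 1")
        (simp_all add: higher_deriv_diff_real[OF smooth_on_ident(1) smooth_on_const(1) assms(2,3)]
          higher_deriv_ident higher_deriv_const_real vanishes_at_one_def)
    then show "(deriv ^^ s) (\<lambda>w. (w - 1) * ((w - 1) ^ m * h w)) 1 = 0"
      by (simp add: leibniz_real(1)[OF shift _ assms(2,3)] smooth_on_power leibniz_real(2) shift assms
          mult.assoc sum.neutral del: mult_eq_0_iff)
  qed
  then show ?case by (simp add: mult.assoc)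
qed

lemma poly_eq_0_if_vanishes_at_one:
  fixes q :: "real poly"
  shows "degree q < M \<Longrightarrow> vanishes_at_one M (poly q) \<Longrightarrow> q = 0"
proof (induction M arbitrary: q)
  case 0
  then show ?case by simp
next
  case (Suc M)
  have "pderiv q = 0"
  proof (cases "degree q = 0")
    case True
    then show ?thesis by (simp add: pderiv_eq_0_iff)
  next
    case False
    show ?thesis
    proof (rule Suc.IH)
      show "degree (pderiv q) < M" using Suc.prems(1) False by (simp add: degree_pderiv)
      show "vanishes_at_one M (poly (pderiv q))"
        unfolding vanishes_at_one_def higher_deriv_poly
      proof (intro allI impI)
        fix s assume "s < M"
        then have "poly ((pderiv ^^ Suc s) q) 1 = 0"
          using Suc.prems(2) by (simp add: vanishes_at_one_def higher_deriv_poly del: funpow.simps)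
        then show "poly ((pderiv ^^ s) (pderiv q)) 1 = 0"
          by (simp only: funpow_Suc_right o_apply)
      qed
    qed
  qed
  then obtain c where "q = [:c:]" by (meson pderiv_eq_0_iff degree_eq_zeroE)
  moreover have "poly q 1 = 0"
    using Suc.prems(2)[unfolded vanishes_at_one_def, rule_format, of 0] by simp
  ultimately show ?case by simp
qed

(* The truncated binomial series S_K(a, x) = sum_{s <= K} binom(a + s - 1, s) x^s, the first
   K + 1 terms of (1 - x)^(-a). *)
definition binom_trunc :: "nat \<Rightarrow> real \<Rightarrow> real poly" where
  "binom_trunc K a = (\<Sum>s\<le>K. monom ((a + real s - 1) gchoose s) s)"

lemma coeff_binom_trunc:
  "coeff (binom_trunc K a) i = (if i \<le> K then (a + real i - 1) gchoose i else 0)"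
  by (simp add: binom_trunc_def coeff_sum)

lemma degree_binom_trunc: "degree (binom_trunc K a) \<le> K"
  by (rule degree_le) (simp add: coeff_binom_trunc)

lemma poly_binom_trunc: "poly (binom_trunc K a) x = (\<Sum>s=0..K. ((a + real s - 1) gchoose s) * x ^ s)"
  by (simp add: binom_trunc_def poly_sum poly_monom atMost_atLeast0)

(* Vandermonde convolution in the form matching the coefficients of (1 - x)^(-a). *)
lemma gbinomial_rising_Vandermonde:
  fixes a b :: real
  shows "(\<Sum>i=0..n. ((a + real i - 1) gchoose i) * ((b + real (n - i) - 1) gchoose (n - i)))
       = (a + b + real n - 1) gchoose n"
proof -
  have neg: "(c + real j - 1) gchoose j = (-1) ^ j * ((-c) gchoose j)" for c :: real and j
    by (simp add: gbinomial_minus)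
  have sign: "(-1::real) ^ i * (-1) ^ (n - i) = (-1) ^ n" if "i \<le> n" for i
    using that by (simp add: power_add[symmetric])
  have "(\<Sum>i=0..n. ((a + real i - 1) gchoose i) * ((b + real (n - i) - 1) gchoose (n - i)))
      = (-1) ^ n * (\<Sum>i=0..n. ((-a) gchoose i) * ((-b) gchoose (n - i)))"
    unfolding neg sum_distrib_left
    by (rule sum.cong) (auto simp: sign[symmetric] mult_ac)
  also have "\<dots> = (-1) ^ n * ((-a + -b) gchoose n)"
    by (simp add: gbinomial_Vandermonde atMost_atLeast0)
  also have "\<dots> = (a + b + real n - 1) gchoose n"
    by (simp add: neg[of "a + b" n])
  finally show ?thesis .
qed

(* (1 - x)^(-a) (1 - x)^(-b) = (1 - x)^(-(a+b)) survives truncation modulo X^(K+1). *)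
lemma binom_trunc_mult:
  "[binom_trunc K a * binom_trunc K b = binom_trunc K (a + b)] (mod monom 1 (Suc K))"
  unfolding cong_iff_dvd_diff monom_1_dvd_iff'
proof (intro allI impI)
  fix k assume "k < Suc K"
  then have "coeff (binom_trunc K a * binom_trunc K b) k
      = (\<Sum>i=0..k. ((a + real i - 1) gchoose i) * ((b + real (k - i) - 1) gchoose (k - i)))"
    by (auto simp: coeff_mult coeff_binom_trunc atMost_atLeast0 intro!: sum.cong)
  also have "\<dots> = coeff (binom_trunc K (a + b)) k"
    using \<open>k < Suc K\<close> by (simp only: gbinomial_rising_Vandermonde) (simp add: coeff_binom_trunc)
  finally show "coeff (binom_trunc K a * binom_trunc K b - binom_trunc K (a + b)) k = 0"
    by simp
qed

lemma binom_trunc_0: "binom_trunc K 0 = 1"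
proof (rule poly_eqI)
  fix i
  have "(real i - 1) gchoose i = 0" if "i > 0"
  proof -
    have "(real i - 1) gchoose i = real (i - 1) gchoose i" using that by simp
    also have "\<dots> = real ((i - 1) choose i)" by (rule binomial_gbinomial[symmetric])
    finally show ?thesis using that by simp
  qed
  then show "coeff (binom_trunc K 0) i = coeff 1 i"
    by (cases "i = 0") (simp_all add: coeff_binom_trunc)
qed

lemma binom_trunc_one_minus_X: "[[:1, -1:] = binom_trunc K (-1)] (mod monom 1 (Suc K))"
  unfolding cong_iff_dvd_diff monom_1_dvd_iff'
proof (intro allI impI)
  fix k assume "k < Suc K"
  have "coeff [:1, -1:] k = coeff (binom_trunc K (-1)) k"
  proof (cases "k \<ge> 2")
    case True
    then obtain j where k: "k = Suc (Suc j)" by (metis add_2_eq_Suc le_Suc_ex)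
    have "(-1 + real k - 1) gchoose k = real (j choose k)"
      by (simp add: k binomial_gbinomial)
    then show ?thesis using \<open>k < Suc K\<close> by (simp add: k coeff_binom_trunc)
  next
    case False
    then have "k = 0 \<or> k = 1" by auto
    then show ?thesis using \<open>k < Suc K\<close> by (auto simp: coeff_binom_trunc)
  qed
  then show "coeff ([:1, -1:] - binom_trunc K (-1)) k = 0" by simp
qed

lemma one_minus_X_power_cong: "[[:1, -1:] ^ m = binom_trunc K (- real m)] (mod monom 1 (Suc K))"
proof (induction m)
  case 0
  then show ?case by (simp add: binom_trunc_0)
next
  case (Suc m)
  have "[[:1, -1:] ^ Suc m = binom_trunc K (-1) * binom_trunc K (- real m)] (mod monom 1 (Suc K))"
    unfolding power_Suc by (rule cong_mult[OF binom_trunc_one_minus_X Suc.IH])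
  also have "[binom_trunc K (-1) * binom_trunc K (- real m) = binom_trunc K (- real (Suc m))] (mod monom 1 (Suc K))"
    using binom_trunc_mult[of K "-1" "- real m"] by (simp add: add.commute)
  finally show ?case .
qed

lemma binom_trunc_inverse: "[[:1, -1:] ^ m * binom_trunc K (real m) = 1] (mod monom 1 (Suc K))"
proof -
  have "[[:1, -1:] ^ m * binom_trunc K (real m) = binom_trunc K (- real m) * binom_trunc K (real m)] (mod monom 1 (Suc K))"
    by (rule cong_mult[OF one_minus_X_power_cong cong_refl])
  also have "[binom_trunc K (- real m) * binom_trunc K (real m) = 1] (mod monom 1 (Suc K))"
    using binom_trunc_mult[of K "- real m" "real m"] by (simp add: binom_trunc_0)
  finally show ?thesis .
qed

lemma delta_sym_power: "delta_sym z ^ n = (-1/4) ^ n * (z - 1) ^ (2 * n) / z ^ n"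
proof -
  have "delta_sym z = (-1/4) * ((z - 1) ^ 2 / z)"
    by (simp add: delta_sym_def power2_commute)
  then show ?thesis
    by (simp only: power_mult_distrib power_divide times_divide_eq_right power_mult)
qed

lemma smooth_on_delta_sym: "smooth_on {0<..} delta_sym"
proof (rule smooth_on_cong[OF _ open_greaterThan])
  show "smooth_on {0<..} (\<lambda>z. -(1/4) * ((z - 1) ^ 2 * z powr (-1)))"
    by (intro smooth_on_cmult(1) leibniz_real(2) smooth_on_power smooth_on_shift smooth_on_powr(1)) auto
  show "-(1/4) * ((z - 1) ^ 2 * z powr (-1)) = delta_sym z" if "z \<in> {0<..}" for z :: real
    using that by (simp add: delta_sym_def powr_neg_one power2_commute)
qed

(* If X^(K+1) divides P then P(delta(z)) vanishes to order 2K + 2 at 1, because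
   delta(z)^(K+1) = (-1/4)^(K+1) (z - 1)^(2K+2) z^(-K-1). *)
lemma vanishes_poly_delta_sym:
  fixes P :: "real poly"
  assumes "monom 1 (Suc K) dvd P" "M \<le> 2 * K + 2"
  shows "vanishes_at_one M (\<lambda>z. poly P (delta_sym z))"
proof -
  obtain Q where Q: "P = monom 1 (Suc K) * Q" using assms(1) by blast
  define h :: "real \<Rightarrow> real"
    where "h = (\<lambda>z. (-1/4) ^ Suc K * ((z - 1) ^ (2 * Suc K - M) * (z powr (- real (Suc K)) * poly Q (delta_sym z))))"
  have "smooth_on {0<..} h"
    unfolding h_def
    by (intro smooth_on_cmult(1) leibniz_real(2) smooth_on_power smooth_on_shift smooth_on_powr(1)
        smooth_on_poly_comp smooth_on_delta_sym) simp_all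
  then have van: "vanishes_at_one M (\<lambda>z. (z - 1) ^ M * h z)"
    by (rule vanishes_at_one_shifted_power) auto
  have eq: "(z - 1) ^ M * h z = poly P (delta_sym z)" if "z \<in> {0<..}" for z
  proof -
    have pw: "z powr (- real (Suc K)) = 1 / z ^ Suc K"
      using that by (subst powr_minus_divide, subst powr_realpow) auto
    have split: "(z - 1) ^ (2 * Suc K) = (z - 1) ^ M * (z - 1) ^ (2 * Suc K - M)"
      using assms(2) by (simp flip: power_add)
    have "poly P (delta_sym z) = delta_sym z ^ Suc K * poly Q (delta_sym z)"
      by (simp add: Q poly_monom)
    also have "\<dots> = (-1/4) ^ Suc K * (z - 1) ^ (2 * Suc K) / z ^ Suc K * poly Q (delta_sym z)"
      by (simp only: delta_sym_power)
    also have "\<dots> = (z - 1) ^ M * h z"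
      unfolding h_def pw split by (simp only: mult_ac times_divide_eq_left times_divide_eq_right mult_1_left)
    finally show ?thesis by simp
  qed
  show ?thesis
    by (rule vanishes_at_one_cong[OF van open_greaterThan[of 0]]) (simp_all add: eq)
qed

(* f is a Laurent polynomial with exponents in [-K, K] (on z <> 0). *)
definition is_laurent_poly :: "nat \<Rightarrow> (real \<Rightarrow> real) \<Rightarrow> bool" where
  "is_laurent_poly K f \<longleftrightarrow> (\<exists>q. degree q \<le> 2 * K \<and> (\<forall>z. z \<noteq> 0 \<longrightarrow> z ^ K * f z = poly q z))"

lemma is_laurent_poly_laurent: "is_laurent_poly K (laurent c (- int K) (int K))"
  unfolding is_laurent_poly_def
proof (intro exI conjI allI impI)
  define q where "q = (\<Sum>j\<in>{- int K..int K}. monom (c j) (nat (j + int K)))"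
  show "degree q \<le> 2 * K"
    unfolding q_def by (rule degree_sum_le) (auto intro!: order.trans[OF degree_monom_le])
  fix z :: real assume z: "z \<noteq> 0"
  have shift: "z ^ nat (j + int K) = z ^ K * z powi j" if "j \<in> {- int K..int K}" for j
  proof -
    have "z ^ nat (j + int K) = z powi (j + int K)" using that by (simp add: power_int_nonneg_exp)
    also have "\<dots> = z powi j * z ^ K" using z by (simp add: power_int_add)
    finally show ?thesis by simp
  qed
  have "poly q z = (\<Sum>j\<in>{- int K..int K}. c j * z ^ nat (j + int K))"
    by (simp add: q_def poly_sum poly_monom)
  also have "\<dots> = z ^ K * laurent c (- int K) (int K) z"
    unfolding laurent_def sum_distrib_left by (rule sum.cong[OF refl]) (simp only: shift mult.left_commute)
  finally show "z ^ K * laurent c (- int K) (int K) z = poly q z" by simp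
qed

(* A polynomial of degree <= K in delta(z) has exponents in [-K, K], as delta(z)^s = (-1/4)^s
   (z - 1)^(2s) z^(-s). *)
lemma is_laurent_poly_poly_delta_sym:
  fixes P :: "real poly"
  assumes "degree P \<le> K"
  shows "is_laurent_poly K (\<lambda>z. poly P (delta_sym z))"
  unfolding is_laurent_poly_def
proof (intro exI conjI allI impI)
  define q where "q = (\<Sum>i\<le>K. smult (coeff P i * (-1/4) ^ i) ([:-1, 1:] ^ (2 * i) * monom 1 (K - i)))"
  show "degree q \<le> 2 * K"
    unfolding q_def
  proof (rule degree_sum_le)
    fix i assume "i \<in> {..K}"
    have "degree ([:-1, 1::real:] ^ (2 * i)) \<le> 2 * i"
      using degree_power_le[of "[:-1, 1::real:]" "2 * i"] by simp
    then have "degree ([:-1, 1::real:] ^ (2 * i) * monom 1 (K - i)) \<le> 2 * i + (K - i)"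
      using degree_mult_le[of "[:-1, 1::real:] ^ (2 * i)" "monom 1 (K - i)"] degree_monom_le[of "1::real" "K - i"]
      by linarith
    then show "degree (smult (coeff P i * (-1/4) ^ i) ([:-1, 1:] ^ (2 * i) * monom 1 (K - i))) \<le> 2 * K"
      using \<open>i \<in> {..K}\<close> by (intro order.trans[OF degree_smult_le]) auto
  qed simp
  fix z :: real assume "z \<noteq> 0"
  have "z ^ K * delta_sym z ^ i = (-1/4) ^ i * ((z - 1) ^ (2 * i) * z ^ (K - i))" if "i \<le> K" for i
  proof -
    have "z ^ K = z ^ i * z ^ (K - i)" using that by (simp flip: power_add)
    then show ?thesis using \<open>z \<noteq> 0\<close> by (simp add: delta_sym_power)
  qed
  moreover have "poly P x = (\<Sum>i\<le>K. coeff P i * x ^ i)" for x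
    unfolding poly_altdef using assms by (intro sum.mono_neutral_left) (auto simp: coeff_eq_0)
  ultimately show "z ^ K * poly P (delta_sym z) = poly q z"
    by (simp add: q_def poly_sum poly_monom sum_distrib_left mult_ac)
qed

lemma is_laurent_poly_diff:
  assumes "is_laurent_poly K f" "is_laurent_poly K g"
  shows "is_laurent_poly K (\<lambda>z. f z - g z)"
proof -
  obtain p q where "degree p \<le> 2 * K" "degree q \<le> 2 * K"
    and "\<forall>z. z \<noteq> 0 \<longrightarrow> z ^ K * f z = poly p z" "\<forall>z. z \<noteq> 0 \<longrightarrow> z ^ K * g z = poly q z"
    using assms unfolding is_laurent_poly_def by blast
  then show ?thesis
    unfolding is_laurent_poly_def
    by (intro exI[of _ "p - q"]) (auto intro: degree_diff_le simp: right_diff_distrib)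
qed

(* Uniqueness: a Laurent polynomial with exponents in [-K, K] vanishing to order M > 2K at 1 is
   zero, since z^K f(z) is then a polynomial of degree < M with the same property. *)
lemma is_laurent_poly_vanishing_eq_0:
  assumes "is_laurent_poly K f" "smooth_on {0<..} f" "vanishes_at_one M f" "2 * K < M" "z \<noteq> 0"
  shows "f z = 0"
proof -
  obtain q where q: "degree q \<le> 2 * K" "\<And>z. z \<noteq> 0 \<Longrightarrow> z ^ K * f z = poly q z"
    using assms(1) unfolding is_laurent_poly_def by blast
  have "vanishes_at_one M (\<lambda>z. z ^ K * f z)"
    by (rule vanishes_at_one_mult[OF assms(3) _ assms(2)])
       (auto intro: smooth_on_power smooth_on_ident(1))
  then have "vanishes_at_one M (poly q)"
    by (rule vanishes_at_one_cong[where S="{0<..}"]) (auto simp: q(2))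
  then have "q = 0"
    using q(1) assms(4) by (intro poly_eq_0_if_vanishes_at_one) auto
  then show ?thesis using q(2)[OF assms(5)] assms(5) by simp
qed

lemma powi_eq_powr: "(x::real) > 0 \<Longrightarrow> x powi j = x powr (real_of_int j)"
  by (simp add: powr_real_of_int power_int_def power_inverse)

lemma smooth_on_laurent: "smooth_on {0<..} (laurent c lo hi)"
proof (rule smooth_on_cong[OF _ open_greaterThan])
  show "smooth_on {0<..} (\<lambda>z. \<Sum>j\<in>{lo..hi}. c j * z powr (real_of_int j))"
    by (intro smooth_on_sum(1) smooth_on_cmult(1) smooth_on_powr(1)) auto
  show "(\<Sum>j\<in>{lo..hi}. c j * z powr (real_of_int j)) = laurent c lo hi z" if "z \<in> {0<..}" for z
    using that by (simp add: laurent_def powi_eq_powr)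
qed

lemma smooth_on_BN: "smooth_on {0<..} (BN N)"
proof (rule smooth_on_cong[OF _ open_greaterThan])
  show "smooth_on {0<..} (\<lambda>z. (1/2) ^ (N - 1) * (z powr (- real ((N + 1) div 2)) * (z - (-1)) ^ N))"
    by (intro smooth_on_cmult(1) leibniz_real(2) smooth_on_power smooth_on_shift smooth_on_powr(1)) auto
  show "(1/2) ^ (N - 1) * (z powr (- real ((N + 1) div 2)) * (z - (-1)) ^ N) = BN N z" if "z \<in> {0<..}" for z
    using that by (simp add: BN_def powi_eq_powr)
qed

lemma BN_at_1: "N \<ge> 1 \<Longrightarrow> BN N 1 = 2"
  by (simp add: BN_def power_one_over power_diff)

lemma sigma_sym_eq: "z \<noteq> 0 \<Longrightarrow> sigma_sym z = 1 - delta_sym z"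
  by (simp add: sigma_sym_def delta_sym_def field_simps power2_eq_square)

lemma BN_even:
  assumes "z \<noteq> 0" "r \<ge> 1"
  shows "BN (2 * r) z = 2 * sigma_sym z ^ r"
proof -
  have "BN (2 * r) z = (1/2) ^ (2 * r - 1) * inverse (z ^ r) * ((z + 1) ^ 2) ^ r"
    by (simp add: BN_def power_int_minus power_mult)
  also have "(1/2::real) ^ (2 * r - 1) = 2 * (1/4) ^ r"
    using assms(2) by (cases r) (simp_all add: power_mult power_one_over)
  finally show ?thesis
    using assms(1) by (simp add: sigma_sym_def field_simps add.commute[of z 1])
qed

lemma BN_odd:
  assumes "z \<noteq> 0"
  shows "BN (2 * r + 1) z = (z + 1) / z * sigma_sym z ^ r"
proof -
  have "(2 * r + 1 + 1) div 2 = Suc r" by simp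
  then have "z powi (- int ((2 * r + 1 + 1) div 2)) = inverse (z ^ Suc r)"
    by (simp only: power_int_minus power_int_of_nat)
  then have "BN (2 * r + 1) z = (1/4) ^ r * inverse (z ^ Suc r) * ((z + 1) * ((z + 1) ^ 2) ^ r)"
    unfolding BN_def by (simp add: power_mult power_one_over)
  then show ?thesis
    using assms by (simp add: sigma_sym_def field_simps add.commute[of z 1])
qed

lemma vanishes_candidate_even:
  assumes "M \<le> 2 * K + 2" "r \<ge> 1"
  shows "vanishes_at_one M (\<lambda>z. poly (binom_trunc K (real r)) (delta_sym z) * BN (2 * r) z - 2)"
proof -
  define P where "P = [:1, -1:] ^ r * binom_trunc K (real r) - 1"
  have "monom 1 (Suc K) dvd P"
    using binom_trunc_inverse[of r K] by (simp add: P_def cong_iff_dvd_diff)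
  then have "vanishes_at_one M (\<lambda>z. poly P (delta_sym z))"
    by (rule vanishes_poly_delta_sym[OF _ assms(1)])
  then have van: "vanishes_at_one M (\<lambda>z. 2 * poly P (delta_sym z))"
    by (rule vanishes_at_one_mult[where S="{0<..}"])
       (auto intro: smooth_on_const smooth_on_poly_comp smooth_on_delta_sym)
  have eq: "2 * poly P (delta_sym z) = poly (binom_trunc K (real r)) (delta_sym z) * BN (2 * r) z - 2"
    if "z \<in> {0<..}" for z
    using that BN_even[of z r] sigma_sym_eq[of z] assms(2) by (simp add: P_def algebra_simps)
  show ?thesis
    by (rule vanishes_at_one_cong[OF van open_greaterThan[of 0]]) (simp_all add: eq)
qed

(* For N = 2r + 1, with a = r + 1/2, the square z (S_K(a, delta) B_N)^2 matches 4 to order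
   2K + 2 at 1: it equals 4 sigma^(2a) S_K(a, delta)^2 and S_K(a)^2 = S_K(2a) mod X^(K+1). *)
lemma vanishes_candidate_odd:
  assumes "M \<le> 2 * K + 2"
  shows "vanishes_at_one M (\<lambda>z. z * (poly (binom_trunc K (real r + 1/2)) (delta_sym z) * BN (2 * r + 1) z) ^ 2 - 4)"
proof -
  define T where "T = binom_trunc K (real r + 1/2)"
  define P where "P = [:1, -1:] ^ (2 * r + 1) * T ^ 2 - 1"
  have "[T * T = binom_trunc K (real (2 * r + 1))] (mod monom 1 (Suc K))"
    using binom_trunc_mult[of K "real r + 1/2" "real r + 1/2"] by (simp add: T_def algebra_simps)
  then have "[[:1, -1:] ^ (2 * r + 1) * T ^ 2 = [:1, -1:] ^ (2 * r + 1) * binom_trunc K (real (2 * r + 1))]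
      (mod monom 1 (Suc K))"
    unfolding power2_eq_square by (rule cong_mult[OF cong_refl])
  also have "[[:1, -1:] ^ (2 * r + 1) * binom_trunc K (real (2 * r + 1)) = 1] (mod monom 1 (Suc K))"
    by (rule binom_trunc_inverse)
  finally have "monom 1 (Suc K) dvd P"
    by (simp add: P_def cong_iff_dvd_diff)
  then have "vanishes_at_one M (\<lambda>z. poly P (delta_sym z))"
    by (rule vanishes_poly_delta_sym[OF _ assms(1)])
  then have van: "vanishes_at_one M (\<lambda>z. 4 * poly P (delta_sym z))"
    by (rule vanishes_at_one_mult[where S="{0<..}"])
       (auto intro: smooth_on_const smooth_on_poly_comp smooth_on_delta_sym)
  have eq: "4 * poly P (delta_sym z) = z * (poly T (delta_sym z) * BN (2 * r + 1) z) ^ 2 - 4"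
    if "z \<in> {0<..}" for z
  proof -
    have z: "z \<noteq> 0" using that by simp
    define d where "d = delta_sym z"
    have sq: "(z + 1) ^ 2 / z = 4 * sigma_sym z"
      unfolding sigma_sym_def add.commute[of 1 z] using z by simp
    have pw: "sigma_sym z ^ (2 * r + 1) = sigma_sym z * (sigma_sym z ^ r) ^ 2"
      by (simp add: power_mult[symmetric] mult.commute)
    have "z * ((z + 1) / z * s) ^ 2 = (z + 1) ^ 2 / z * s ^ 2" for s
      using z by (simp add: power_mult_distrib power_divide power2_eq_square)
    then have square: "z * ((z + 1) / z * sigma_sym z ^ r) ^ 2 = 4 * sigma_sym z ^ (2 * r + 1)"
      unfolding sq pw by (simp only: mult.assoc)
    have "z * (poly T d * BN (2 * r + 1) z) ^ 2 = poly T d ^ 2 * (z * ((z + 1) / z * sigma_sym z ^ r) ^ 2)"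
      unfolding BN_odd[OF z] by (simp only: power_mult_distrib mult_ac)
    also have "\<dots> = 4 * (sigma_sym z ^ (2 * r + 1) * poly T d ^ 2)"
      unfolding square by (simp only: mult_ac)
    also have "\<dots> = 4 * (poly P d + 1)"
    proof -
      have "poly [:1, -1:] d = sigma_sym z" by (simp add: d_def sigma_sym_eq[OF z])
      then show ?thesis by (simp only: P_def poly_diff poly_mult poly_power poly_1) simp
    qed
    finally show ?thesis by (simp add: d_def)
  qed
  show ?thesis
    by (rule vanishes_at_one_cong[OF van open_greaterThan[of 0]]) (simp_all add: eq[unfolded T_def])
qed

lemma moment_conditions_vanish:
  fixes L B :: "real \<Rightarrow> real" and p :: real
  assumes L: "smooth_on {0<..} L" and B: "smooth_on {0<..} B"
    and moments: "\<And>s. s < M \<Longrightarrow>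
      (\<Sum>i=0..s. real (s choose i) * (deriv ^^ i) L 1 * (deriv ^^ (s - i)) B 1) = 2 * (\<Prod>i<s. p - real i)"
  shows "vanishes_at_one M (\<lambda>z. L z * B z - 2 * z powr p)"
  unfolding vanishes_at_one_def
proof (intro allI impI)
  fix s assume "s < M"
  have LB: "smooth_on {0<..} (\<lambda>z. L z * B z)"
    by (rule leibniz_real(2)[OF L B open_greaterThan])
  have powr: "smooth_on {0<..} (\<lambda>z. z powr p)"
    by (rule smooth_on_powr(1))
  have "(deriv ^^ s) (\<lambda>z. L z * B z) 1 = 2 * (\<Prod>i<s. p - real i)"
    using leibniz_real(1)[OF L B open_greaterThan, of 1 s] moments[OF \<open>s < M\<close>] by simp
  moreover have "(deriv ^^ s) (\<lambda>z. 2 * z powr p) 1 = 2 * (\<Prod>i<s. p - real i)"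
    by (simp add: higher_deriv_cmult_real[OF powr open_greaterThan] higher_deriv_powr)
  ultimately show "(deriv ^^ s) (\<lambda>z. L z * B z - 2 * z powr p) 1 = 0"
    by (simp add: higher_deriv_diff_real[OF LB smooth_on_cmult(1)[OF powr open_greaterThan] open_greaterThan])
qed

lemma symbol_even:
  fixes L :: "real \<Rightarrow> real"
  assumes L: "is_laurent_poly K L" "smooth_on {0<..} L" and M: "2 * K < M" "M \<le> 2 * K + 2"
    and "r \<ge> 1" and van: "vanishes_at_one M (\<lambda>z. L z * BN (2 * r) z - 2 * z powr 0)" and "z \<noteq> 0"
  shows "L z = poly (binom_trunc K (real r)) (delta_sym z)"
proof -
  define C :: "real \<Rightarrow> real" where "C = (\<lambda>z. poly (binom_trunc K (real r)) (delta_sym z))"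
  have C: "smooth_on {0<..} C"
    unfolding C_def by (rule smooth_on_poly_comp[OF smooth_on_delta_sym open_greaterThan])
  have B: "smooth_on {0<..} (BN (2 * r))"
    by (rule smooth_on_BN)
  have "vanishes_at_one M (\<lambda>z. L z * BN (2 * r) z - 2)"
    by (rule vanishes_at_one_cong[OF van open_greaterThan[of 0]]) simp_all
  then have "vanishes_at_one M (\<lambda>z. (L z * BN (2 * r) z - 2) - (C z * BN (2 * r) z - 2))"
    using vanishes_candidate_even[OF M(2) \<open>r \<ge> 1\<close>] unfolding C_def
    by (rule vanishes_at_one_diff[where S="{0<..}"])
       (simp_all add: C_def smooth_on_diff(1) leibniz_real(2) smooth_on_const(1) L(2) B C[unfolded C_def])
  then have "vanishes_at_one M (\<lambda>z. BN (2 * r) z * (L z - C z))"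
    by (rule vanishes_at_one_cong[OF _ open_UNIV]) (simp_all add: algebra_simps)
  then have "vanishes_at_one M (\<lambda>z. L z - C z)"
    using \<open>r \<ge> 1\<close> by (intro vanishes_at_one_cancel[OF _ _ B smooth_on_diff(1)[OF L(2) C] open_greaterThan])
      (simp_all add: BN_at_1)
  moreover have "is_laurent_poly K (\<lambda>z. L z - C z)"
    unfolding C_def by (intro is_laurent_poly_diff L(1) is_laurent_poly_poly_delta_sym degree_binom_trunc)
  ultimately have "L z - C z = 0"
    by (intro is_laurent_poly_vanishing_eq_0[OF _ smooth_on_diff(1)[OF L(2) C] _ M(1) \<open>z \<noteq> 0\<close>])
       simp_all
  then show ?thesis by (simp add: C_def)
qed

(* Odd N: multiplying L B - g by z (L B + g), g = 2 z^(-1/2), removes the square root. *)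
lemma symbol_odd:
  fixes L :: "real \<Rightarrow> real"
  assumes L: "is_laurent_poly K L" "smooth_on {0<..} L" and M: "2 * K < M" "M \<le> 2 * K + 2"
    and van: "vanishes_at_one M (\<lambda>z. L z * BN (2 * r + 1) z - 2 * z powr (-1/2))" and "z \<noteq> 0"
  shows "L z = poly (binom_trunc K (real r + 1/2)) (delta_sym z)"
proof -
  define C :: "real \<Rightarrow> real" where "C = (\<lambda>z. poly (binom_trunc K (real r + 1/2)) (delta_sym z))"
  define B where "B = BN (2 * r + 1)"
  define g :: "real \<Rightarrow> real" where "g = (\<lambda>z. 2 * z powr (-1/2))"
  have C: "smooth_on {0<..} C"
    unfolding C_def by (rule smooth_on_poly_comp[OF smooth_on_delta_sym open_greaterThan])
  have B: "smooth_on {0<..} B"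
    unfolding B_def by (rule smooth_on_BN)
  have g: "smooth_on {0<..} g"
    unfolding g_def by (rule smooth_on_cmult(1)[OF smooth_on_powr(1) open_greaterThan])
  have squared: "smooth_on {0<..} (\<lambda>z. z * (X z * B z) ^ 2 - 4)" if "smooth_on {0<..} X" for X
    by (intro smooth_on_diff(1) leibniz_real(2) smooth_on_power smooth_on_ident(1) smooth_on_const(1)
        that B open_greaterThan)
  have L1: "L 1 = 1"
    using van[unfolded vanishes_at_one_def, rule_format, of 0] M(1) by (simp add: BN_at_1)
  have LB: "smooth_on {0<..} (\<lambda>z. L z * B z)"
    by (rule leibniz_real(2)[OF L(2) B open_greaterThan])
  have "vanishes_at_one M (\<lambda>z. L z * B z - g z)"
    using van by (simp add: B_def g_def)
  then have factored: "vanishes_at_one M (\<lambda>z. (z * (L z * B z + g z)) * (L z * B z - g z))"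
    by (rule vanishes_at_one_mult[OF _ _ smooth_on_diff(1)[OF LB g open_greaterThan] open_greaterThan])
       (simp_all add: leibniz_real(2) smooth_on_ident(1) smooth_on_add LB g)
  have difference_of_squares:
    "z * (L z * B z + g z) * (L z * B z - g z) = z * (L z * B z) ^ 2 - 4" if "z \<in> {0<..}" for z
  proof -
    have "(z powr (-1/2)) ^ 2 = z powr (-1/2) * z powr (-1/2)"
      by (rule power2_eq_square)
    also have "\<dots> = 1 / z"
      using that by (simp flip: powr_add add: powr_neg_one)
    finally have "z * g z ^ 2 = 4"
      using that by (simp add: g_def power_mult_distrib)
    then show ?thesis by (simp add: algebra_simps power2_eq_square)
  qed
  have "vanishes_at_one M (\<lambda>z. z * (L z * B z) ^ 2 - 4)"
    by (rule vanishes_at_one_cong[OF factored open_greaterThan[of 0] _ difference_of_squares]) simp_all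
  moreover have "vanishes_at_one M (\<lambda>z. z * (C z * B z) ^ 2 - 4)"
    using vanishes_candidate_odd[OF M(2), of r] by (simp add: C_def B_def)
  ultimately have "vanishes_at_one M (\<lambda>z. (z * (L z * B z) ^ 2 - 4) - (z * (C z * B z) ^ 2 - 4))"
    by (rule vanishes_at_one_diff[OF _ _ squared[OF L(2)] squared[OF C] open_greaterThan]) simp
  then have "vanishes_at_one M (\<lambda>z. (z * B z ^ 2 * (L z + C z)) * (L z - C z))"
    by (rule vanishes_at_one_cong[OF _ open_UNIV]) (simp_all add: algebra_simps power2_eq_square)
  then have "vanishes_at_one M (\<lambda>z. L z - C z)"
  proof (rule vanishes_at_one_cancel[OF _ _ _ smooth_on_diff(1)[OF L(2) C] open_greaterThan])
    show "smooth_on {0<..} (\<lambda>z. z * B z ^ 2 * (L z + C z))"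
      by (intro leibniz_real(2) smooth_on_power smooth_on_ident(1) smooth_on_add B L(2) C open_greaterThan)
    have "C 1 = 1"
      by (simp add: C_def delta_sym_def poly_0_coeff_0 coeff_binom_trunc)
    then show "1 * B 1 ^ 2 * (L 1 + C 1) \<noteq> 0"
      by (simp add: B_def BN_at_1 L1)
  qed simp_all
  moreover have "is_laurent_poly K (\<lambda>z. L z - C z)"
    unfolding C_def by (intro is_laurent_poly_diff L(1) is_laurent_poly_poly_delta_sym degree_binom_trunc)
  ultimately have "L z - C z = 0"
    by (intro is_laurent_poly_vanishing_eq_0[OF _ smooth_on_diff(1)[OF L(2) C] _ M(1) \<open>z \<noteq> 0\<close>])
       simp_all
  then show ?thesis by (simp add: C_def)
qed

theorem mainTheorem11:
  fixes N M :: nat and c :: "int \<Rightarrow> real"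
  defines "k \<equiv> int ((M + 1) div 2)"
  defines "\<rho> \<equiv> N div 2"
  defines "p \<equiv> (if even N then 0 else - 1/2 :: real)"
  assumes "N \<ge> 1" and "M \<ge> 1" and "M \<le> N" and "even (N - M)"
  assumes supp: "\<And>j. j \<notin> {-k+1..k-1} \<Longrightarrow> c j = 0"
  assumes sym: "\<And>z. z \<noteq> 0 \<Longrightarrow> laurent c (-k+1) (k-1) z = laurent c (-k+1) (k-1) (inverse z)"
  assumes cond: "\<And>s. s < M \<Longrightarrow>
      (\<Sum>i=0..s. real (s choose i) * (deriv ^^ i) (laurent c (-k+1) (k-1)) 1
                   * (deriv ^^ (s - i)) (BN N) 1)
      = 2 * (\<Prod>i<s. p - real i)"
  assumes "z \<noteq> 0"
  shows "BN N z * laurent c (-k+1) (k-1) z =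
     (if even N then
        2 * sigma_sym z ^ \<rho> * (\<Sum>s=0..(M - 1) div 2. ((real \<rho> + real s - 1) gchoose s) * delta_sym z ^ s)
      else
        (z + 1) / z * sigma_sym z ^ \<rho> * (\<Sum>s=0..(M - 1) div 2. ((real \<rho> - 1/2 + real s) gchoose s) * delta_sym z ^ s))"
proof -
  define K where "K = (M - 1) div 2"
  have range: "- k + 1 = - int K" "k - 1 = int K" and M: "2 * K < M" "M \<le> 2 * K + 2"
    using \<open>M \<ge> 1\<close> by (auto simp: k_def K_def)
  define L where "L = laurent c (- int K) (int K)"
  have L: "is_laurent_poly K L" "smooth_on {0<..} L"
    unfolding L_def by (rule is_laurent_poly_laurent, rule smooth_on_laurent)
  have van: "vanishes_at_one M (\<lambda>z. L z * BN N z - 2 * z powr p)"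
    by (rule moment_conditions_vanish[OF L(2) smooth_on_BN cond[unfolded range, folded L_def]])
  show ?thesis
  proof (cases "even N")
    case True
    then obtain r where N: "N = 2 * r" and "r \<ge> 1" using \<open>N \<ge> 1\<close> by (auto elim!: evenE)
    have "L z = poly (binom_trunc K (real r)) (delta_sym z)"
      by (rule symbol_even[OF L M \<open>r \<ge> 1\<close> _ \<open>z \<noteq> 0\<close>]) (use van True in \<open>simp add: N p_def\<close>)
    then show ?thesis
      using True BN_even[OF \<open>z \<noteq> 0\<close> \<open>r \<ge> 1\<close>] unfolding range
      by (simp add: L_def N \<rho>_def K_def poly_binom_trunc)
  next
    case False
    then obtain r where N: "N = 2 * r + 1" by (auto elim!: oddE)
    have "L z = poly (binom_trunc K (real r + 1/2)) (delta_sym z)"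
      by (rule symbol_odd[OF L M _ \<open>z \<noteq> 0\<close>]) (use van False in \<open>simp add: N p_def\<close>)
    moreover have "poly (binom_trunc K (real r + 1/2)) x = (\<Sum>s=0..K. ((real r - 1/2 + real s) gchoose s) * x ^ s)"
      for x
      unfolding poly_binom_trunc by (rule sum.cong) (simp_all add: algebra_simps)
    ultimately show ?thesis
      using False BN_odd[OF \<open>z \<noteq> 0\<close>, of r] unfolding range
      by (simp add: L_def N \<rho>_def K_def)
  qed
qed

end
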